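(* Let $A$ be a partial ring and $a,b\in A$. If $D(b)\subseteq D(a)$, then there exists $k\in\mathbb{N}$ such that $b^k\in(a)$.
   Context: A partial ring is a set $A$ with $0$, a set $A_2\subseteq A\times A$ of summable pairs and a partial addition ($0$ a unit summable with everything; commutative; associative in the sense: $(a,b),(a+b,c)\in A_2$ iff $(b,c),(a,b+c)\in A_2$, and then $(a+b)+c=a+(b+c)$), with a commutative associative multiplication with unit $1$ such that $0\cdot a=0$ and $(a_1,a_2)\in A_2\Rightarrow(a_1x,a_2x)\in A_2$, $(a_1+a_2)x=a_1x+a_2x$. A tuple $(c_1,\dots,c_r)$ is summable if $c_1+\dots+c_r$ can be calculated in $A$. The ideal $(a)$ is $\{c_1a+\dots+c_ra: r\in\mathbb{N}, c_i\in A, (c_1a,\dots,c_ra)\text{ summable}\}$. A prime ideal is a subset $\mathfrak p\ne A$ containing $0$, closed under sums of summable pairs of its elements, with $A\mathfrak p\subseteq\mathfrak p$, and such that $xy\in\mathfrak p$ implies $x\in\mathfrak p$ or $y\in\mathfrak p$. $D(a)$ is the set of prime ideals $\mathfrak p$ with $a\notin\mathfrak p$. *)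

theory Defs
  imports Main
begin

text \<open>A partial ring whose underlying set is the whole type 'a.
  summ x y means (x,y) is in A_2; padd is only meaningful on summable pairs.\<close>
record 'a pring =
  summ :: "'a \<Rightarrow> 'a \<Rightarrow> bool"
  padd :: "'a \<Rightarrow> 'a \<Rightarrow> 'a"
  pzero :: 'a
  pmul :: "'a \<Rightarrow> 'a \<Rightarrow> 'a"
  pone :: 'a

definition partial_ring :: "'a pring \<Rightarrow> bool" where
  "partial_ring R \<longleftrightarrow>
     (\<forall>a. summ R (pzero R) a \<and> summ R a (pzero R) \<and> padd R (pzero R) a = a \<and> padd R a (pzero R) = a) \<and>
     (\<forall>a b. summ R a b \<longrightarrow> summ R b a \<and> padd R a b = padd R b a) \<and>
     (\<forall>a b c. (summ R a b \<and> summ R (padd R a b) c) \<longleftrightarrow> (summ R b c \<and> summ R a (padd R b c))) \<and>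
     (\<forall>a b c. summ R a b \<and> summ R (padd R a b) c \<longrightarrow>
               padd R (padd R a b) c = padd R a (padd R b c)) \<and>
     (\<forall>a b. pmul R a b = pmul R b a) \<and>
     (\<forall>a b c. pmul R (pmul R a b) c = pmul R a (pmul R b c)) \<and>
     (\<forall>a. pmul R (pone R) a = a) \<and>
     (\<forall>a. pmul R (pzero R) a = pzero R) \<and>
     (\<forall>a1 a2 x. summ R a1 a2 \<longrightarrow>
        summ R (pmul R a1 x) (pmul R a2 x) \<and>
        pmul R (padd R a1 a2) x = padd R (pmul R a1 x) (pmul R a2 x))"

fun summable_from :: "'a pring \<Rightarrow> 'a \<Rightarrow> 'a list \<Rightarrow> bool" where
  "summable_from R acc [] = True"
| "summable_from R acc (x # xs) = (summ R acc x \<and> summable_from R (padd R acc x) xs)"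

definition tuple_summable :: "'a pring \<Rightarrow> 'a list \<Rightarrow> bool" where
  "tuple_summable R xs = summable_from R (pzero R) xs"

definition tuple_sum :: "'a pring \<Rightarrow> 'a list \<Rightarrow> 'a" where
  "tuple_sum R xs = foldl (padd R) (pzero R) xs"

definition principal_ideal :: "'a pring \<Rightarrow> 'a \<Rightarrow> 'a set" where
  "principal_ideal R a =
     {tuple_sum R (map (\<lambda>c. pmul R c a) cs) | cs. tuple_summable R (map (\<lambda>c. pmul R c a) cs)}"

definition prime_ideal :: "'a pring \<Rightarrow> 'a set \<Rightarrow> bool" where
  "prime_ideal R P \<longleftrightarrow>
     P \<noteq> UNIV \<and> pzero R \<in> P \<and>
     (\<forall>x\<in>P. \<forall>y\<in>P. summ R x y \<longrightarrow> padd R x y \<in> P) \<and>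
     (\<forall>a. \<forall>x\<in>P. pmul R a x \<in> P) \<and>
     (\<forall>x y. pmul R x y \<in> P \<longrightarrow> x \<in> P \<or> y \<in> P)"

definition Dset :: "'a pring \<Rightarrow> 'a \<Rightarrow> 'a set set" where
  "Dset R a = {P. prime_ideal R P \<and> a \<notin> P}"

fun ppow :: "'a pring \<Rightarrow> 'a \<Rightarrow> nat \<Rightarrow> 'a" where
  "ppow R b 0 = pone R"
| "ppow R b (Suc k) = pmul R b (ppow R b k)"

end

theory Submission
  imports Defs
begin

text \<open>If no power of \<open>b\<close> lies in \<open>(a)\<close>, Zorn's lemma yields an ideal \<open>P \<supseteq> (a)\<close> maximal
  among the ideals avoiding the multiplicative set of powers of \<open>b\<close>. Such a \<open>P\<close> is prime: if
  \<open>xy \<in> P\<close> with \<open>x, y \<notin> P\<close>, the colon ideal \<open>(P : y)\<close> properly contains \<open>P\<close>, hence some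
  \<open>b\<^sup>m y \<in> P\<close>; then \<open>(P : b\<^sup>m)\<close> contains \<open>y\<close>, hence some \<open>b\<^sup>n b\<^sup>m \<in> P\<close>. So \<open>P \<in> D(b)\<close> but
  \<open>P \<notin> D(a)\<close>.\<close>

locale partial_ring_context =
  fixes R :: "'a pring"
  assumes partial_ring: "partial_ring R"
begin

lemma summ_zero_left: "summ R (pzero R) x"
  and padd_zero_left: "padd R (pzero R) x = x"
  and padd_zero_right: "padd R x (pzero R) = x"
  using partial_ring unfolding partial_ring_def by auto

lemma summ_assoc_right_to_left:
  assumes "summ R y z" "summ R x (padd R y z)"
  shows "summ R x y" "summ R (padd R x y) z" "padd R (padd R x y) z = padd R x (padd R y z)"
  using assms partial_ring unfolding partial_ring_def by metis+

lemma pmul_commute: "pmul R x y = pmul R y x"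
  and pmul_assoc: "pmul R (pmul R x y) z = pmul R x (pmul R y z)"
  and pmul_one_left: "pmul R (pone R) x = x"
  and pmul_zero_left: "pmul R (pzero R) x = pzero R"
  using partial_ring unfolding partial_ring_def by auto

lemma summ_pmul_right: "summ R x y \<Longrightarrow> summ R (pmul R x z) (pmul R y z)"
  and pmul_padd_distrib_right:
    "summ R x y \<Longrightarrow> pmul R (padd R x y) z = padd R (pmul R x z) (pmul R y z)"
  using partial_ring unfolding partial_ring_def by auto

lemma summable_from_append1:
  "summable_from R acc (xs @ [x]) \<longleftrightarrow> summable_from R acc xs \<and> summ R (foldl (padd R) acc xs) x"
  by (induction xs arbitrary: acc) auto

lemma tuple_summable_append:
  assumes "tuple_summable R xs" "tuple_summable R ys"
    and "summ R (tuple_sum R xs) (tuple_sum R ys)"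
  shows "tuple_summable R (xs @ ys) \<and> tuple_sum R (xs @ ys) = padd R (tuple_sum R xs) (tuple_sum R ys)"
  using assms(2,3)
proof (induction ys rule: rev_induct)
  case Nil
  then show ?case
    using assms(1) by (simp add: tuple_sum_def padd_zero_right)
next
  case (snoc y ys)
  let ?s = "tuple_sum R xs" and ?t = "tuple_sum R ys"
  have ys: "tuple_summable R ys" "summ R ?t y"
    using snoc.prems(1) by (auto simp: tuple_summable_def tuple_sum_def summable_from_append1)
  have "summ R ?s (padd R ?t y)"
    using snoc.prems(2) by (simp add: tuple_sum_def)
  note assoc = summ_assoc_right_to_left[OF ys(2) this]
  show ?case
    using snoc.IH[OF ys(1) assoc(1)] assoc(2,3)
    by (simp add: tuple_summable_def tuple_sum_def summable_from_append1
        flip: append_assoc)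
qed

lemma summable_from_map_pmul:
  "summable_from R acc xs \<Longrightarrow>
    summable_from R (pmul R acc z) (map (\<lambda>x. pmul R x z) xs) \<and>
    foldl (padd R) (pmul R acc z) (map (\<lambda>x. pmul R x z) xs) = pmul R (foldl (padd R) acc xs) z"
proof (induction xs arbitrary: acc)
  case Nil
  then show ?case by simp
next
  case (Cons x xs)
  then have "summ R acc x" and IH:
    "summable_from R (pmul R (padd R acc x) z) (map (\<lambda>x. pmul R x z) xs) \<and>
     foldl (padd R) (pmul R (padd R acc x) z) (map (\<lambda>x. pmul R x z) xs) =
       pmul R (foldl (padd R) (padd R acc x) xs) z"
    by auto
  then show ?case
    by (simp add: summ_pmul_right flip: pmul_padd_distrib_right)
qed

lemma tuple_summable_map_pmul:
  "tuple_summable R xs \<Longrightarrow>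
    tuple_summable R (map (\<lambda>x. pmul R x z) xs) \<and>
    tuple_sum R (map (\<lambda>x. pmul R x z) xs) = pmul R (tuple_sum R xs) z"
  using summable_from_map_pmul[of "pzero R" xs z]
  by (simp add: tuple_summable_def tuple_sum_def pmul_zero_left)

lemma ppow_add: "ppow R b (m + n) = pmul R (ppow R b m) (ppow R b n)"
  by (induction m) (auto simp: pmul_one_left pmul_assoc)

lemma ppow_1: "ppow R b 1 = b"
  using pmul_commute[of b "pone R"] by (simp add: pmul_one_left)

definition ideal :: "'a set \<Rightarrow> bool" where
  "ideal I \<longleftrightarrow> pzero R \<in> I \<and> (\<forall>x\<in>I. \<forall>y\<in>I. summ R x y \<longrightarrow> padd R x y \<in> I) \<and>
     (\<forall>r. \<forall>x\<in>I. pmul R r x \<in> I)"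

lemma prime_ideal_iff:
  "prime_ideal R P \<longleftrightarrow> ideal P \<and> P \<noteq> UNIV \<and> (\<forall>x y. pmul R x y \<in> P \<longrightarrow> x \<in> P \<or> y \<in> P)"
  unfolding prime_ideal_def ideal_def by blast

lemma principal_ideal_iff:
  "x \<in> principal_ideal R a \<longleftrightarrow>
     (\<exists>cs. tuple_summable R (map (\<lambda>c. pmul R c a) cs) \<and> x = tuple_sum R (map (\<lambda>c. pmul R c a) cs))"
  unfolding principal_ideal_def by blast

lemma mem_principal_ideal_self: "a \<in> principal_ideal R a"
  unfolding principal_ideal_iff
  by (rule exI[of _ "[pone R]"])
    (simp add: tuple_sum_def tuple_summable_def summ_zero_left padd_zero_left pmul_one_left)

lemma ideal_principal_ideal: "ideal (principal_ideal R a)"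
  unfolding ideal_def
proof (intro conjI ballI allI impI)
  show "pzero R \<in> principal_ideal R a"
    unfolding principal_ideal_iff
    by (rule exI[of _ "[]"]) (simp add: tuple_sum_def tuple_summable_def)
next
  fix x y assume "x \<in> principal_ideal R a" "y \<in> principal_ideal R a" and "summ R x y"
  then obtain cs ds where
    "tuple_summable R (map (\<lambda>c. pmul R c a) cs)" "x = tuple_sum R (map (\<lambda>c. pmul R c a) cs)"
    "tuple_summable R (map (\<lambda>c. pmul R c a) ds)" "y = tuple_sum R (map (\<lambda>c. pmul R c a) ds)"
    unfolding principal_ideal_iff by blast
  with \<open>summ R x y\<close> show "padd R x y \<in> principal_ideal R a"
    using tuple_summable_append[of "map (\<lambda>c. pmul R c a) cs" "map (\<lambda>c. pmul R c a) ds"]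
    unfolding principal_ideal_iff by (intro exI[of _ "cs @ ds"]) simp
next
  fix r x assume "x \<in> principal_ideal R a"
  then obtain cs where
    cs: "tuple_summable R (map (\<lambda>c. pmul R c a) cs)" "x = tuple_sum R (map (\<lambda>c. pmul R c a) cs)"
    unfolding principal_ideal_iff by blast
  have "map (\<lambda>c. pmul R c a) (map (pmul R r) cs) = map (\<lambda>y. pmul R y r) (map (\<lambda>c. pmul R c a) cs)"
    by (simp add: pmul_assoc) (metis pmul_assoc pmul_commute)
  with tuple_summable_map_pmul[OF cs(1), of r] cs(2)
  have "pmul R x r \<in> principal_ideal R a"
    unfolding principal_ideal_iff by (intro exI[of _ "map (pmul R r) cs"]) (simp del: map_map)
  then show "pmul R r x \<in> principal_ideal R a"
    by (simp add: pmul_commute)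
qed

lemma ideal_colon: "ideal I \<Longrightarrow> ideal {x. pmul R x w \<in> I}"
  unfolding ideal_def
  by (simp add: pmul_zero_left pmul_assoc summ_pmul_right pmul_padd_distrib_right)

lemma ideal_subset_colon: "ideal I \<Longrightarrow> I \<subseteq> {x. pmul R x w \<in> I}"
  unfolding ideal_def by (auto simp: pmul_commute[of _ w])

lemma ideal_Union_chain:
  assumes "C \<noteq> {}" "subset.chain {I. ideal I} C"
  shows "ideal (\<Union>C)"
proof -
  have ideals: "\<And>I. I \<in> C \<Longrightarrow> ideal I"
    and comparable: "\<And>I J. I \<in> C \<Longrightarrow> J \<in> C \<Longrightarrow> I \<subseteq> J \<or> J \<subseteq> I"
    using assms(2) unfolding subset_chain_def by auto
  show ?thesis
    unfolding ideal_def
  proof (intro conjI ballI allI impI)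
    from \<open>C \<noteq> {}\<close> obtain I where "I \<in> C" by blast
    with ideals show "pzero R \<in> \<Union>C"
      unfolding ideal_def by blast
  next
    fix x y assume "x \<in> \<Union>C" "y \<in> \<Union>C" "summ R x y"
    then obtain I J where "I \<in> C" "J \<in> C" "x \<in> I" "y \<in> J" by blast
    with comparable obtain K where "K \<in> C" "x \<in> K" "y \<in> K" by blast
    with ideals \<open>summ R x y\<close> show "padd R x y \<in> \<Union>C"
      unfolding ideal_def by blast
  next
    fix r x assume "x \<in> \<Union>C"
    with ideals show "pmul R r x \<in> \<Union>C"
      unfolding ideal_def by blast
  qed
qed

lemma exists_maximal_ideal_disjoint:
  assumes "ideal I" "I \<inter> S = {}"
  obtains P where "ideal P" "I \<subseteq> P" "P \<inter> S = {}"
    and "\<And>J. ideal J \<Longrightarrow> P \<subseteq> J \<Longrightarrow> J \<inter> S = {} \<Longrightarrow> J = P"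
proof -
  let ?F = "{J. ideal J \<and> I \<subseteq> J \<and> J \<inter> S = {}}"
  have "\<Union>C \<in> ?F" if "C \<noteq> {}" "subset.chain ?F C" for C
  proof -
    have "C \<subseteq> ?F"
      using that(2) unfolding subset_chain_def by blast
    then have "subset.chain {I. ideal I} C"
      using that(2) unfolding subset_chain_def by blast
    with \<open>C \<subseteq> ?F\<close> \<open>C \<noteq> {}\<close> show ?thesis
      using ideal_Union_chain by auto
  qed
  moreover have "?F \<noteq> {}"
    using assms by blast
  ultimately obtain P where "P \<in> ?F" "\<forall>J\<in>?F. P \<subseteq> J \<longrightarrow> J = P"
    using subset_Zorn_nonempty[of ?F] by blast
  then show thesis
    by (intro that) auto
qed

lemma maximal_ideal_disjoint_is_prime:
  assumes "ideal P" "P \<inter> S = {}" "S \<noteq> {}"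
    and mult_closed: "\<And>s t. s \<in> S \<Longrightarrow> t \<in> S \<Longrightarrow> pmul R s t \<in> S"
    and maximal: "\<And>J. ideal J \<Longrightarrow> P \<subseteq> J \<Longrightarrow> J \<inter> S = {} \<Longrightarrow> J = P"
  shows "prime_ideal R P"
proof -
  have colon_meets: "\<exists>s\<in>S. pmul R s w \<in> P" if "z \<notin> P" "pmul R z w \<in> P" for z w
  proof (rule ccontr)
    assume "\<not> (\<exists>s\<in>S. pmul R s w \<in> P)"
    then have "{x. pmul R x w \<in> P} = P"
      using ideal_colon ideal_subset_colon \<open>ideal P\<close> by (intro maximal) auto
    with that show False by blast
  qed
  show ?thesis
    unfolding prime_ideal_iff
  proof (intro conjI allI impI)
    show "ideal P" by fact
    show "P \<noteq> UNIV"
      using assms(2,3) by blast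
    fix x y assume "pmul R x y \<in> P"
    show "x \<in> P \<or> y \<in> P"
    proof (rule ccontr)
      assume "\<not> (x \<in> P \<or> y \<in> P)"
      then have "x \<notin> P" "y \<notin> P" by auto
      obtain s where "s \<in> S" "pmul R s y \<in> P"
        using colon_meets[OF \<open>x \<notin> P\<close> \<open>pmul R x y \<in> P\<close>] by blast
      then have "pmul R y s \<in> P"
        by (simp add: pmul_commute)
      then obtain t where "t \<in> S" "pmul R t s \<in> P"
        using colon_meets[OF \<open>y \<notin> P\<close>] by blast
      with \<open>s \<in> S\<close> mult_closed \<open>P \<inter> S = {}\<close> show False by blast
    qed
  qed
qed

end

theorem mainTheorem18:
  fixes R :: "'a pring" and a b :: 'a
  assumes "partial_ring R"
    and "Dset R b \<subseteq> Dset R a"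
  shows "\<exists>k::nat. ppow R b k \<in> principal_ideal R a"
proof (rule ccontr)
  interpret partial_ring_context R by (standard, fact assms(1))
  let ?S = "range (ppow R b)"
  assume "\<not> (\<exists>k. ppow R b k \<in> principal_ideal R a)"
  then have "principal_ideal R a \<inter> ?S = {}" by blast
  then obtain P where P: "ideal P" "principal_ideal R a \<subseteq> P" "P \<inter> ?S = {}"
    and maximal: "\<And>J. ideal J \<Longrightarrow> P \<subseteq> J \<Longrightarrow> J \<inter> ?S = {} \<Longrightarrow> J = P"
    using exists_maximal_ideal_disjoint[OF ideal_principal_ideal] by blast
  have "\<And>s t. s \<in> ?S \<Longrightarrow> t \<in> ?S \<Longrightarrow> pmul R s t \<in> ?S"
    by (auto simp flip: ppow_add)
  with P maximal have "prime_ideal R P"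
    by (intro maximal_ideal_disjoint_is_prime) auto
  moreover have "b \<notin> P"
    using P(3) ppow_1[of b] by (metis disjoint_iff rangeI)
  ultimately have "P \<in> Dset R a"
    using assms(2) unfolding Dset_def by blast
  with P(2) show False
    using mem_principal_ideal_self unfolding Dset_def by blast
qed

end
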